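(* Let $\lambda_1,\lambda_2,\lambda_3$ be pairwise distinct nonzero complex numbers, $J_1=\mathrm{diag}(\lambda_1,\lambda_2,\lambda_3)$, and $h>0$. Define $$T_1=\lambda_1(e^{\lambda_2h}-e^{\lambda_3h})+\lambda_2(e^{\lambda_3h}-e^{\lambda_1h})+\lambda_3(e^{\lambda_1h}-e^{\lambda_2h}),$$ $$T_2=\lambda_1(1-e^{\lambda_1h})(e^{\lambda_2h}-e^{\lambda_3h})+\lambda_2(1-e^{\lambda_2h})(e^{\lambda_3h}-e^{\lambda_1h})+\lambda_3(1-e^{\lambda_3h})(e^{\lambda_1h}-e^{\lambda_2h}),$$ $C_1=\lambda_2-\lambda_1+\lambda_1e^{\lambda_1h}-\lambda_2e^{\lambda_2h}$, and $$\theta=\frac{T_1}{T_2},\qquad \phi=\frac{e^{\lambda_1h}-e^{\lambda_2h}}{\lambda_1-\lambda_2+\theta C_1},\qquad \psi=e^{\lambda_3h}-\phi\lambda_3\big(\theta e^{\lambda_3h}+1-\theta\big).$$ Then (whenever these expressions are defined and the scheme is uniquely solvable for $\mathbf{x}_{k+1}$) the difference scheme $$\frac{\mathbf{x}_{k+1}-\psi\mathbf{x}_k}{\phi}=J_1\big[\theta\mathbf{x}_{k+1}+(1-\theta)\mathbf{x}_k\big]$$ is exact for the system $\mathbf{x}'=J_1\mathbf{x}$, $\mathbf{x}(t)=(x(t),y(t),z(t))^T$.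
   Context: A one-step difference scheme with step size $h>0$ for $\mathbf{x}'=M\mathbf{x}$ is called exact if for every initial vector $\mathbf{x}_0$ the sequence $(\mathbf{x}_k)$ it generates satisfies $\mathbf{x}_k=\mathbf{x}(kh)$ for all $k\ge 0$, where $\mathbf{x}(t)$ solves $\mathbf{x}'=M\mathbf{x}$, $\mathbf{x}(0)=\mathbf{x}_0$. *)

theory Defs
  imports "HOL-Analysis.Analysis"
begin

text \<open>A one-step scheme is given as a relation S between x_k and x_(k+1).\<close>
definition exact_scheme ::
  "real \<Rightarrow> complex^'n^'n \<Rightarrow> (complex^'n \<Rightarrow> complex^'n \<Rightarrow> bool) \<Rightarrow> bool" where
  "exact_scheme h M S \<longleftrightarrow>
     (\<forall>(xs :: nat \<Rightarrow> complex^'n) (X :: real \<Rightarrow> complex^'n).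
        (\<forall>k. S (xs k) (xs (Suc k))) \<and>
        X 0 = xs 0 \<and> (\<forall>t. (X has_vector_derivative (M *v X t)) (at t))
        \<longrightarrow> (\<forall>k. xs k = X (real k * h)))"

definition diag3 :: "complex \<Rightarrow> complex \<Rightarrow> complex \<Rightarrow> complex^3^3" where
  "diag3 l1 l2 l3 = (\<chi> i j. if i = j then (if i = 1 then l1 else if i = 2 then l2 else l3) else 0)"

definition T1 :: "complex \<Rightarrow> complex \<Rightarrow> complex \<Rightarrow> real \<Rightarrow> complex" where
  "T1 l1 l2 l3 h = (let e1 = exp (l1 * of_real h); e2 = exp (l2 * of_real h); e3 = exp (l3 * of_real h)
     in l1 * (e2 - e3) + l2 * (e3 - e1) + l3 * (e1 - e2))"

definition T2 :: "complex \<Rightarrow> complex \<Rightarrow> complex \<Rightarrow> real \<Rightarrow> complex" where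
  "T2 l1 l2 l3 h = (let e1 = exp (l1 * of_real h); e2 = exp (l2 * of_real h); e3 = exp (l3 * of_real h)
     in l1 * (1 - e1) * (e2 - e3) + l2 * (1 - e2) * (e3 - e1) + l3 * (1 - e3) * (e1 - e2))"

definition C1 :: "complex \<Rightarrow> complex \<Rightarrow> real \<Rightarrow> complex" where
  "C1 l1 l2 h = l2 - l1 + l1 * exp (l1 * of_real h) - l2 * exp (l2 * of_real h)"

definition theta :: "complex \<Rightarrow> complex \<Rightarrow> complex \<Rightarrow> real \<Rightarrow> complex" where
  "theta l1 l2 l3 h = T1 l1 l2 l3 h / T2 l1 l2 l3 h"

definition phi :: "complex \<Rightarrow> complex \<Rightarrow> complex \<Rightarrow> real \<Rightarrow> complex" where
  "phi l1 l2 l3 h = (exp (l1 * of_real h) - exp (l2 * of_real h)) /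
                    (l1 - l2 + theta l1 l2 l3 h * C1 l1 l2 h)"

definition psi :: "complex \<Rightarrow> complex \<Rightarrow> complex \<Rightarrow> real \<Rightarrow> complex" where
  "psi l1 l2 l3 h = exp (l3 * of_real h) - phi l1 l2 l3 h * l3 *
     (theta l1 l2 l3 h * exp (l3 * of_real h) + 1 - theta l1 l2 l3 h)"

definition scheme :: "complex \<Rightarrow> complex \<Rightarrow> complex \<Rightarrow> complex^3^3 \<Rightarrow> complex^3 \<Rightarrow> complex^3 \<Rightarrow> bool" where
  "scheme ph ps th J x y \<longleftrightarrow>
     (1 / ph) *s (y - ps *s x) = J *v (th *s y + (1 - th) *s x)"

end

theory Submission imports Defs begin

text \<open>The system decouples into x_i' = l_i x_i, and in the i-th coordinate the scheme reads
  (1 - phi l_i theta) x_(k+1) = (psi + phi l_i (1 - theta)) x_k. It is therefore exact as soon as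
  exp (l_i h) - psi = phi l_i (theta exp (l_i h) + 1 - theta) for i = 1, 2, 3 and
  1 - phi l_i theta \<noteq> 0. The choice of psi is exactly the condition for i = 3, that of phi the
  difference of the conditions for i = 1 and i = 2, and the difference of the conditions for
  i = 1 and i = 3 reduces to T1 = theta T2. Unique solvability of the scheme forces
  1 - phi l_i theta \<noteq> 0.\<close>

lemma linear_scalar_ode_solution:
  fixes f :: "real \<Rightarrow> complex"
  assumes deriv: "\<And>t. (f has_vector_derivative (c * f t)) (at t)"
  shows "f t = exp (c * of_real t) * f 0"
proof -
  define g where "g t = exp (t *\<^sub>R (-c)) * f t" for t
  have g_deriv: "(g has_vector_derivative 0) (at t within UNIV)" for t
  proof -
    have "(g has_vector_derivative
            (exp (t *\<^sub>R (-c)) * (c * f t) + exp (t *\<^sub>R (-c)) * (-c) * f t)) (at t)"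
      unfolding g_def
      by (intro has_vector_derivative_mult exp_scaleR_has_vector_derivative_right deriv)
    moreover have "exp (t *\<^sub>R (-c)) * (c * f t) + exp (t *\<^sub>R (-c)) * (-c) * f t = 0"
      by (simp add: algebra_simps)
    ultimately show ?thesis
      by simp
  qed
  obtain k where "\<And>x. g x = k"
    by (rule has_vector_derivative_zero_constant[of UNIV g]) (use g_deriv in auto)
  then have "g t = g 0"
    by simp
  then have "exp (- (c * of_real t)) * f t = f 0"
    by (simp add: g_def scaleR_conv_of_real mult.commute)
  then have "exp (c * of_real t) * f 0 = (exp (c * of_real t) * exp (- (c * of_real t))) * f t"
    by (simp only: mult.assoc)
  then show ?thesis
    by (simp add: exp_minus field_simps)
qed

lemma exact_scheme_diagonalI:
  fixes M :: "complex^'n^'n" and L :: "'n \<Rightarrow> complex"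
  assumes diagonal: "\<And>v. M *v v = (\<chi> i. L i * v $ i)"
    and step: "\<And>x y i. S x y \<Longrightarrow> y $ i = exp (L i * of_real h) * x $ i"
  shows "exact_scheme h M S"
  unfolding exact_scheme_def
proof (intro allI impI)
  fix xs :: "nat \<Rightarrow> complex^'n" and X :: "real \<Rightarrow> complex^'n" and k
  assume H: "(\<forall>k. S (xs k) (xs (Suc k))) \<and> X 0 = xs 0 \<and>
      (\<forall>t. (X has_vector_derivative M *v X t) (at t))"
  have discrete: "xs n $ i = exp (L i * of_real (real n * h)) * xs 0 $ i" for n i
  proof (induction n)
    case (Suc n)
    have "xs (Suc n) $ i = exp (L i * of_real h) * xs n $ i"
      using step H by blast
    also have "\<dots> = exp (L i * of_real h + L i * of_real (real n * h)) * xs 0 $ i"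
      using Suc by (simp add: exp_add)
    finally show ?case
      by (simp add: algebra_simps)
  qed simp
  have continuous: "X t $ i = exp (L i * of_real t) * X 0 $ i" for t i
  proof (rule linear_scalar_ode_solution)
    fix t
    have "((\<lambda>t. X t $ i) has_vector_derivative (M *v X t) $ i) (at t)"
      using bounded_linear.has_vector_derivative[OF bounded_linear_vec_nth] H by blast
    then show "((\<lambda>t. X t $ i) has_vector_derivative L i * X t $ i) (at t)"
      by (simp add: diagonal)
  qed
  show "xs k = X (real k * h)"
    unfolding vec_eq_iff
  proof
    fix i
    have "X (real k * h) $ i = exp (L i * of_real (real k * h)) * X 0 $ i"
      by (rule continuous)
    also have "X 0 = xs 0"
      using H by blast
    finally show "xs k $ i = X (real k * h) $ i"
      using discrete[of k i] by simp
  qed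
qed

definition diag3_entry :: "complex \<Rightarrow> complex \<Rightarrow> complex \<Rightarrow> 3 \<Rightarrow> complex" where
  "diag3_entry l1 l2 l3 i = (if i = 1 then l1 else if i = 2 then l2 else l3)"

lemma diag3_mult_vec: "diag3 l1 l2 l3 *v v = (\<chi> i. diag3_entry l1 l2 l3 i * v $ i)"
  unfolding diag3_def diag3_entry_def
  by (simp add: vec_eq_iff matrix_vector_mult_def if_distrib[where f="\<lambda>x. x * _"] cong: if_cong)

lemma scheme_diag3_iff:
  "scheme ph ps th (diag3 l1 l2 l3) x y \<longleftrightarrow>
     (\<forall>i. (1 / ph) * (y $ i - ps * x $ i) = diag3_entry l1 l2 l3 i * (th * y $ i + (1 - th) * x $ i))"
  unfolding scheme_def diag3_mult_vec by (simp add: vec_eq_iff algebra_simps)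

lemma scheme_coefficients_consistent:
  fixes l1 l2 l3 :: complex and h :: real
  assumes T2_nonzero: "T2 l1 l2 l3 h \<noteq> 0"
    and denom: "l1 - l2 + theta l1 l2 l3 h * C1 l1 l2 h \<noteq> 0"
  defines "ph \<equiv> phi l1 l2 l3 h" and "ps \<equiv> psi l1 l2 l3 h" and "th \<equiv> theta l1 l2 l3 h"
  shows "exp (l1 * of_real h) - ps = ph * l1 * (th * exp (l1 * of_real h) + 1 - th)"
    and "exp (l2 * of_real h) - ps = ph * l2 * (th * exp (l2 * of_real h) + 1 - th)"
    and "exp (l3 * of_real h) - ps = ph * l3 * (th * exp (l3 * of_real h) + 1 - th)"
proof -
  define e1 where "e1 = exp (l1 * of_real h)"
  define e2 where "e2 = exp (l2 * of_real h)"
  define e3 where "e3 = exp (l3 * of_real h)"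
  define D where "D = l1 - l2 + th * C1 l1 l2 h"
  have "D \<noteq> 0" using denom by (simp add: D_def th_def)
  have C1: "C1 l1 l2 h = l2 - l1 + l1 * e1 - l2 * e2" by (simp add: C1_def e1_def e2_def)
  have T1: "T1 l1 l2 l3 h = l1 * (e2 - e3) + l2 * (e3 - e1) + l3 * (e1 - e2)"
    by (simp add: T1_def e1_def e2_def e3_def Let_def)
  have T2: "T2 l1 l2 l3 h
      = l1 * (1 - e1) * (e2 - e3) + l2 * (1 - e2) * (e3 - e1) + l3 * (1 - e3) * (e1 - e2)"
    by (simp add: T2_def e1_def e2_def e3_def Let_def)
  have ph: "ph * D = e1 - e2"
    using \<open>D \<noteq> 0\<close> by (simp add: ph_def phi_def D_def th_def e1_def e2_def)
  have ps: "ps = e3 - ph * l3 * (th * e3 + 1 - th)"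
    by (simp add: ps_def psi_def ph_def th_def e3_def)
  have "(e1 - e3) * D - (e1 - e2) * (l1 - l3 + th * (l3 - l1 + l1 * e1 - l3 * e3))
          = T1 l1 l2 l3 h - th * T2 l1 l2 l3 h"
    unfolding T1 T2 D_def C1 by (simp add: algebra_simps)
  also have "th * T2 l1 l2 l3 h = T1 l1 l2 l3 h"
    using T2_nonzero by (simp add: th_def theta_def)
  finally have "(e1 - e3) * D = (ph * D) * (l1 - l3 + th * (l3 - l1 + l1 * e1 - l3 * e3))"
    by (simp add: ph)
  then have "(e1 - e3) * D = (ph * (l1 - l3 + th * (l3 - l1 + l1 * e1 - l3 * e3))) * D"
    by (simp only: mult_ac)
  then have e13: "e1 - e3 = ph * (l1 - l3 + th * (l3 - l1 + l1 * e1 - l3 * e3))"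
    using \<open>D \<noteq> 0\<close> by simp
  have e12: "e1 - e2 = ph * (l1 - l2 + th * (l2 - l1 + l1 * e1 - l2 * e2))"
    using ph by (simp add: D_def C1)
  show "e3 - ps = ph * l3 * (th * e3 + 1 - th)"
    using ps by simp
  have "e1 - ps = (e1 - e3) + ph * l3 * (th * e3 + 1 - th)"
    using ps by simp
  also have "\<dots> = ph * l1 * (th * e1 + 1 - th)"
    unfolding e13 by (simp add: algebra_simps)
  finally show cond1: "e1 - ps = ph * l1 * (th * e1 + 1 - th)" .
  have "e2 - ps = (e1 - ps) - (e1 - e2)"
    by simp
  also have "\<dots> = ph * l2 * (th * e2 + 1 - th)"
    unfolding cond1 e12 by (simp add: algebra_simps)
  finally show "e2 - ps = ph * l2 * (th * e2 + 1 - th)" .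
qed

lemma scalar_scheme_step:
  fixes ph ps th l e x y :: complex
  assumes "ph \<noteq> 0" and "1 - ph * l * th \<noteq> 0"
    and consistent: "e - ps = ph * l * (th * e + 1 - th)"
    and step: "(1 / ph) * (y - ps * x) = l * (th * y + (1 - th) * x)"
  shows "y = e * x"
proof -
  have "y - ps * x = ph * l * (th * y + (1 - th) * x)"
    using step \<open>ph \<noteq> 0\<close> by (simp add: field_simps)
  then have "y * (1 - ph * l * th) = x * (ps + ph * l * (1 - th))"
    by (simp add: algebra_simps)
  also have "ps = e - ph * l * (th * e + 1 - th)"
    using consistent by (simp add: algebra_simps)
  finally have "y * (1 - ph * l * th) = (e * x) * (1 - ph * l * th)"
    by (simp add: algebra_simps)
  then show ?thesis
    using \<open>1 - ph * l * th \<noteq> 0\<close> by simp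
qed

text \<open>If 1 - phi l_i theta = 0, both 0 and the i-th unit vector are successors of 0.\<close>
lemma scheme_unique_imp_nondegenerate:
  assumes "ph \<noteq> 0"
    and unique: "\<forall>x. \<exists>!y. scheme ph ps th (diag3 l1 l2 l3) x y"
  shows "1 - ph * diag3_entry l1 l2 l3 i * th \<noteq> 0"
proof
  assume "1 - ph * diag3_entry l1 l2 l3 i * th = 0"
  then have "1 / ph = diag3_entry l1 l2 l3 i * th"
    using \<open>ph \<noteq> 0\<close> by (simp add: field_simps)
  then have "scheme ph ps th (diag3 l1 l2 l3) 0 (axis i 1)"
    unfolding scheme_diag3_iff by (simp add: axis_def)
  moreover have "scheme ph ps th (diag3 l1 l2 l3) 0 0"
    unfolding scheme_diag3_iff by simp
  moreover have "axis i (1::complex) \<noteq> 0"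
    by (simp add: axis_eq_0_iff)
  ultimately show False
    using unique by blast
qed

theorem theorem4:
  fixes l1 l2 l3 :: complex and h :: real
  assumes "l1 \<noteq> 0" "l2 \<noteq> 0" "l3 \<noteq> 0"
    and "l1 \<noteq> l2" "l1 \<noteq> l3" "l2 \<noteq> l3"
    and "h > 0"
    and "T2 l1 l2 l3 h \<noteq> 0"
    and "l1 - l2 + theta l1 l2 l3 h * C1 l1 l2 h \<noteq> 0"
    and "phi l1 l2 l3 h \<noteq> 0"
    and "\<forall>x. \<exists>!y. scheme (phi l1 l2 l3 h) (psi l1 l2 l3 h) (theta l1 l2 l3 h) (diag3 l1 l2 l3) x y"
  shows "exact_scheme h (diag3 l1 l2 l3)
           (scheme (phi l1 l2 l3 h) (psi l1 l2 l3 h) (theta l1 l2 l3 h) (diag3 l1 l2 l3))"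
proof (rule exact_scheme_diagonalI[OF diag3_mult_vec])
  fix x y i
  let ?l = "diag3_entry l1 l2 l3 i"
  assume "scheme (phi l1 l2 l3 h) (psi l1 l2 l3 h) (theta l1 l2 l3 h) (diag3 l1 l2 l3) x y"
  then have step: "(1 / phi l1 l2 l3 h) * (y $ i - psi l1 l2 l3 h * x $ i)
      = ?l * (theta l1 l2 l3 h * y $ i + (1 - theta l1 l2 l3 h) * x $ i)"
    unfolding scheme_diag3_iff by blast
  have consistent: "exp (?l * of_real h) - psi l1 l2 l3 h
      = phi l1 l2 l3 h * ?l * (theta l1 l2 l3 h * exp (?l * of_real h) + 1 - theta l1 l2 l3 h)"
    using scheme_coefficients_consistent[OF assms(8,9)] by (simp add: diag3_entry_def)
  show "y $ i = exp (?l * of_real h) * x $ i"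
    using scalar_scheme_step[OF assms(10) scheme_unique_imp_nondegenerate[OF assms(10,11)]
        consistent step] .
qed

end
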